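(* Let $\ell$ and $m$ be integers with $2\le\ell\le m$, let $G$ be an abelian group written additively, let $\mathbf{a}=(a_1,\dots,a_m)$ be a sequence of elements of $G$, and let $A$ be the set of distinct terms of $\mathbf{a}$. Assume \[ |\Sigma^{\ell}(\mathbf{a})|<\begin{cases}p(G)-1,&\ell=2,\\ p(G),&\ell\ge3,\end{cases} \] that $\mu_{\mathbf{a}}(a)=\ell$ for some $a\in A$, that $|\{a\in A:\mu_{\mathbf{a}}(a)\ge2\}|\ge2$, and that \[ |\Sigma^{\ell}(\mathbf{a})|=\sum_{a\in A}\mu_{\mathbf{a}}(a)-\ell+1 . \] Then $A$ is an arithmetic progression.
   Context: $p(G)$ is the order of the smallest nontrivial subgroup of $G$, or $\infty$ if none exists. $\Sigma^{\ell}(\mathbf{a})$ is the set of all sums $a_{i_1}+\cdots+a_{i_\ell}$ with $1\le i_1<\cdots<i_\ell\le m$. $\rho_a(\mathbf{a})=|\{i:a_i=a\}|$, $\mu_{\mathbf{a}}(a)=\min(\ell,\rho_a(\mathbf{a}))$. An arithmetic progression is a set $\{c+jd:j\in[0,k-1]\}$ with $d\ne0$. *)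

theory Defs
  imports Main "HOL-Library.Extended_Nat"
begin

definition add_subgroup :: "'a::ab_group_add set \<Rightarrow> bool" where
  "add_subgroup H \<longleftrightarrow> 0 \<in> H \<and> (\<forall>x\<in>H. \<forall>y\<in>H. x + y \<in> H) \<and> (\<forall>x\<in>H. - x \<in> H)"

text \<open>p(G): the order of the smallest nontrivial subgroup, infinity if none (infinite subgroups have order infinity).\<close>
definition pG :: "'a::ab_group_add itself \<Rightarrow> enat" where
  "pG _ = (INF H \<in> {H::'a set. add_subgroup H \<and> H \<noteq> {0}}.
             (if finite H then enat (card H) else \<infinity>))"

definition Sigma_l :: "nat \<Rightarrow> 'a::ab_group_add list \<Rightarrow> 'a set" where
  "Sigma_l l a = {(\<Sum>i\<in>I. a ! i) | I. I \<subseteq> {..<length a} \<and> card I = l}"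

definition rho :: "'a \<Rightarrow> 'a list \<Rightarrow> nat" where
  "rho x a = card {i. i < length a \<and> a ! i = x}"

definition mu :: "nat \<Rightarrow> 'a list \<Rightarrow> 'a \<Rightarrow> nat" where
  "mu l a x = min l (rho x a)"

definition nsum :: "nat \<Rightarrow> 'a::ab_group_add \<Rightarrow> 'a" where
  "nsum j d = (\<Sum>i<j. d)"

definition arith_prog :: "'a::ab_group_add set \<Rightarrow> bool" where
  "arith_prog S \<longleftrightarrow> (\<exists>c d k. d \<noteq> 0 \<and> S = {c + nsum j d | j. j < k})"

end

theory Submission
  imports Defs "HOL-Library.Set_Algebras" "HOL-Analysis.Convex"
begin

text \<open>
  Row \<open>i\<close> of the sequence collects the values of multiplicity \<open>\<mu> > i\<close>. Picking one element from
  each of the rows \<open>R\<^sub>0 = A, R\<^sub>1, \<dots>, R\<^sub>l\<^sub>-\<^sub>1\<close> gives a sum of \<open>l\<close> terms with distinct indices, so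
  \<open>R\<^sub>0 + \<dots> + R\<^sub>l\<^sub>-\<^sub>1 \<subseteq> \<Sigma>\<^sup>l(a)\<close>, and the hypothesis says that this sumset is as small as the
  Cauchy--Davenport inequality (valid below \<open>p(G)\<close>) permits. Hence every partial sum is critical,
  in particular \<open>|A + R\<^sub>1| = |A| + |R\<^sub>1| - 1\<close>. Vosper's theorem, proved below \<open>p(G)\<close> by Dyson's
  \<open>e\<close>-transform and an additive energy count, then makes \<open>R\<^sub>1\<close> an arithmetic progression, and the
  criticality of \<open>A + R\<^sub>1\<close> passes its difference on to \<open>A\<close>. Vosper's theorem is applied to a
  critical pair \<open>(X, R\<^sub>1)\<close> with \<open>|X + R\<^sub>1| \<le> p(G) - 2\<close>: \<open>X = A\<close> when \<open>l = 2\<close> or the third row has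
  two elements, and otherwise \<open>X\<close> is \<open>A\<close> without an element moved into the third row.
\<close>

section \<open>Cauchy--Davenport below \<open>p(G)\<close>\<close>

lemma nsum_0 [simp]: "nsum 0 d = 0"
  by (simp add: nsum_def)

lemma nsum_Suc: "nsum (Suc j) d = nsum j d + d"
  by (simp add: nsum_def)

lemma nsum_1 [simp]: "nsum 1 d = d"
  by (simp add: nsum_def)

lemma nsum_add: "nsum (i + j) d = nsum i d + nsum j d"
  by (induction j) (simp_all add: nsum_Suc add.assoc)

lemma nsum_mult_eq_0: "nsum k d = 0 \<Longrightarrow> nsum (q * k) d = 0"
  by (induction q) (simp_all add: nsum_add)

lemma nsum_mod: "nsum k d = 0 \<Longrightarrow> nsum (j mod k) d = nsum j d"
  using nsum_add[of "j div k * k" "j mod k" d] nsum_mult_eq_0[of k d "j div k"] by simp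

lemma pG_le_card_subgroup:
  assumes "add_subgroup H" "H \<noteq> {0}" "finite H"
  shows "pG TYPE('a::ab_group_add) \<le> enat (card (H::'a set))"
proof -
  have "pG TYPE('a) \<le> (if finite H then enat (card H) else \<infinity>)"
    unfolding pG_def by (rule INF_lower) (use assms in auto)
  with assms show ?thesis by simp
qed

lemma pG_le_of_nsum_eq_0:
  fixes d :: "'a::ab_group_add"
  assumes "d \<noteq> 0" "0 < k" "nsum k d = 0"
  shows "pG TYPE('a) \<le> enat k"
proof -
  define H where "H = (\<lambda>j. nsum j d) ` {..<k}"
  have mem: "nsum j d \<in> H" for j
    using nsum_mod[OF assms(3), of j] assms(2) unfolding H_def by (metis lessThan_iff mod_less_divisor rev_image_eqI)
  have "add_subgroup H"
    unfolding add_subgroup_def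
  proof (intro conjI ballI)
    show "0 \<in> H" using mem[of 0] by simp
  next
    fix x y assume "x \<in> H" "y \<in> H"
    then obtain i j where "x = nsum i d" "y = nsum j d" unfolding H_def by auto
    then show "x + y \<in> H" using mem[of "i + j"] by (simp add: nsum_add)
  next
    fix x assume "x \<in> H"
    then obtain i where i: "x = nsum i d" "i < k" unfolding H_def by auto
    then have "x + nsum (k - i) d = 0"
      using assms(3) nsum_add[of i "k - i" d] by simp
    then have "- x = nsum (k - i) d" by (simp add: neg_eq_iff_add_eq_0)
    then show "- x \<in> H" using mem by simp
  qed
  moreover have "H \<noteq> {0}" using mem[of 1] assms(1) by (metis nsum_1 singletonD)
  moreover have "card H \<le> k" unfolding H_def using card_image_le[of "{..<k}"] by simp
  ultimately show ?thesis using pG_le_card_subgroup[of H] unfolding H_def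
    by (meson enat_ord_simps(1) finite_imageI finite_lessThan order_trans)
qed

lemma inj_on_nsum:
  fixes d :: "'a::ab_group_add"
  assumes "d \<noteq> 0" "enat N < pG TYPE('a)"
  shows "inj_on (\<lambda>j. c + nsum j d) {..N}"
proof (rule linorder_inj_onI')
  fix i j assume "i \<in> {..N}" "j \<in> {..N}" "i < j"
  moreover have "\<not> pG TYPE('a) \<le> enat (j - i)"
    using assms(2) \<open>j \<in> {..N}\<close> by (metis atMost_iff diff_le_self enat_ord_simps(1) leD order.trans)
  ultimately have "nsum (j - i) d \<noteq> 0" using pG_le_of_nsum_eq_0[OF assms(1)] by auto
  then show "c + nsum i d \<noteq> c + nsum j d"
    using nsum_add[of i "j - i" d] \<open>i < j\<close> by auto
qed

lemma pG_le_card_if_translation_closed: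
  fixes d :: "'a::ab_group_add"
  assumes "finite X" "x \<in> X" "d \<noteq> 0" "\<And>y. y \<in> X \<Longrightarrow> y + d \<in> X"
  shows "pG TYPE('a) \<le> enat (card X)"
proof (rule ccontr)
  assume "\<not> ?thesis"
  then have inj: "inj_on (\<lambda>j. x + nsum j d) {..card X}"
    by (intro inj_on_nsum[OF assms(3)]) simp
  have "x + nsum j d \<in> X" for j
    by (induction j) (use assms(2,4) in \<open>simp_all add: nsum_Suc flip: add.assoc\<close>)
  then have "card ((\<lambda>j. x + nsum j d) ` {..card X}) \<le> card X"
    by (intro card_mono[OF assms(1)]) auto
  then show False using card_image[OF inj] by simp
qed

lemma enat_le_less_trans: "m \<le> n \<Longrightarrow> enat n < x \<Longrightarrow> enat m < x"
  by (meson enat_ord_simps(1) order_le_less_trans)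

lemma card_le_card_set_plus:
  fixes X Y :: "'a::ab_group_add set"
  assumes "finite X" "finite Y" "y \<in> Y"
  shows "card X \<le> card (X + Y)"
proof -
  have "card (X + {y}) \<le> card (X + Y)"
    using assms by (intro card_mono finite_set_plus set_plus_mono2) auto
  then show ?thesis by (simp add: card_plus_sing)
qed

lemma dyson_transform_subset:
  fixes X Y :: "'a::ab_group_add set"
  shows "(X \<union> (\<lambda>v. v + e) ` Y) + {v \<in> Y. v + e \<in> X} \<subseteq> X + Y"
proof
  fix z assume "z \<in> (X \<union> (\<lambda>v. v + e) ` Y) + {v \<in> Y. v + e \<in> X}"
  then obtain u v where uv: "z = u + v" "u \<in> X \<union> (\<lambda>v. v + e) ` Y" "v \<in> Y" "v + e \<in> X"
    by (auto elim: set_plus_elim)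
  show "z \<in> X + Y"
  proof (cases "u \<in> X")
    case False
    then obtain w where "w \<in> Y" "u = w + e" using uv(2) by auto
    then have "z = (v + e) + w" using uv(1) by (simp add: algebra_simps)
    with \<open>w \<in> Y\<close> uv(4) show ?thesis by blast
  qed (use uv in blast)
qed

lemma card_dyson_transform:
  fixes X Y :: "'a::ab_group_add set"
  assumes "finite X" "finite Y"
  shows "card (X \<union> (\<lambda>v. v + e) ` Y) + card {v \<in> Y. v + e \<in> X} = card X + card Y"
proof -
  have "X \<inter> (\<lambda>v. v + e) ` Y = (\<lambda>v. v + e) ` {v \<in> Y. v + e \<in> X}" by auto
  then show ?thesis
    using card_Un_Int[OF assms(1) finite_imageI[OF assms(2)], of "\<lambda>v. v + e"]
    by (simp add: card_image)
qed

lemma exists_translate_notin: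
  fixes X Y :: "'a::ab_group_add set"
  assumes "finite X" "X \<noteq> {}" "y1 \<in> Y" "y2 \<in> Y" "y1 \<noteq> y2" "enat (card X) < pG TYPE('a)"
  shows "\<exists>x\<in>X. \<exists>y\<in>Y. \<exists>y'\<in>Y. x + y - y' \<notin> X"
proof (rule ccontr)
  assume "\<not> ?thesis"
  moreover obtain x0 where "x0 \<in> X" using assms(2) by blast
  ultimately have "pG TYPE('a) \<le> enat (card X)"
    using assms by (intro pG_le_card_if_translation_closed[of X x0 "y1 - y2"]) (auto simp: add_diff_eq)
  with assms(6) show False by simp
qed

text \<open>Induction on \<open>|Y|\<close> via Dyson's \<open>e\<close>-transform, which keeps \<open>|X| + |Y|\<close> and does not
  enlarge \<open>X + Y\<close>; it shrinks \<open>Y\<close> for \<open>e = x - y'\<close> whenever \<open>x + y - y' \<notin> X\<close>.\<close>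
theorem cauchy_davenport:
  fixes X Y :: "'a::ab_group_add set"
  assumes "finite X" "finite Y" "X \<noteq> {}" "Y \<noteq> {}" "enat (card (X + Y)) < pG TYPE('a)"
  shows "card X + card Y \<le> card (X + Y) + 1"
  using assms
proof (induction "card Y" arbitrary: X Y rule: less_induct)
  case less
  show ?case
  proof (cases "card Y = 1")
    case True
    then obtain y where "Y = {y}" by (rule card_1_singletonE)
    then show ?thesis by (simp add: card_plus_sing)
  next
    case False
    with less.prems(2,4) have "\<not> card Y \<le> Suc 0" by (simp add: le_Suc_eq)
    then obtain y1 y2 where y12: "y1 \<in> Y" "y2 \<in> Y" "y1 \<noteq> y2"
      using card_le_Suc0_iff_eq[OF less.prems(2)] by blast
    have "enat (card X) < pG TYPE('a)"
      using card_le_card_set_plus[OF less.prems(1,2) y12(1)] less.prems(5) by (rule enat_le_less_trans)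
    then obtain x y y' where xy: "x \<in> X" "y \<in> Y" "y' \<in> Y" "x + y - y' \<notin> X"
      using exists_translate_notin[OF less.prems(1,3) y12] by blast
    define X' where "X' = X \<union> (\<lambda>v. v + (x - y')) ` Y"
    define Y' where "Y' = {v \<in> Y. v + (x - y') \<in> X}"
    have "y \<notin> Y'" "y' \<in> Y'" using xy by (auto simp: Y'_def algebra_simps)
    with xy(2) have lt: "card Y' < card Y"
      by (intro psubset_card_mono less.prems(2)) (auto simp: Y'_def)
    have sub: "X' + Y' \<subseteq> X + Y"
      unfolding X'_def Y'_def by (rule dyson_transform_subset)
    then have card_sub: "card (X' + Y') \<le> card (X + Y)"
      using card_mono[OF finite_set_plus[OF less.prems(1,2)]] by blast
    have "finite X'" "finite Y'" "X' \<noteq> {}" "Y' \<noteq> {}"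
      using less.prems \<open>y' \<in> Y'\<close> by (auto simp: X'_def Y'_def)
    then have "card X' + card Y' \<le> card (X' + Y') + 1"
      using less.hyps[OF lt] enat_le_less_trans[OF card_sub less.prems(5)] by blast
    moreover have "card X' + card Y' = card X + card Y"
      unfolding X'_def Y'_def using card_dyson_transform less.prems(1,2) .
    ultimately show ?thesis using card_sub by linarith
  qed
qed

section \<open>Arithmetic progressions with a given difference\<close>

definition arith_prog_with_diff :: "'a::ab_group_add \<Rightarrow> 'a set \<Rightarrow> bool" where
  "arith_prog_with_diff d X \<longleftrightarrow> (\<exists>c. X = (\<lambda>j. c + nsum j d) ` {..<card X})"

lemma arith_prog_with_diffE:
  assumes "arith_prog_with_diff d X"
  obtains c where "X = (\<lambda>j. c + nsum j d) ` {..<card X}"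
  using assms unfolding arith_prog_with_diff_def by blast

lemma arith_prog_if_with_diff:
  assumes "arith_prog_with_diff d X" "d \<noteq> 0"
  shows "arith_prog X"
proof -
  obtain c where "X = (\<lambda>j. c + nsum j d) ` {..<card X}"
    using assms(1) by (rule arith_prog_with_diffE)
  then have "X = {c + nsum j d | j. j < card X}" by auto
  with assms(2) show ?thesis unfolding arith_prog_def by blast
qed

lemma arith_prog_card_2:
  fixes X :: "'a::ab_group_add set"
  assumes "card X = 2"
  shows "arith_prog X"
proof -
  obtain u v where uv: "X = {u, v}" "u \<noteq> v" using assms by (meson card_2_iff)
  have "{..<card X} = {0, 1}" using assms by auto
  then have "X = (\<lambda>j. u + nsum j (v - u)) ` {..<card X}"
    using uv by (simp add: nsum_Suc)
  with uv(2) show ?thesis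
    by (intro arith_prog_if_with_diff[of "v - u"]) (auto simp: arith_prog_with_diff_def)
qed

lemma nsum_uminus: "nsum j (- d) = - nsum j d"
  by (simp add: nsum_def sum_negf)

text \<open>Walking back from \<open>x\<close> in steps of \<open>d\<close> stays in \<open>X\<close> until it reaches \<open>x\<^sub>1\<close>, and below
  \<open>p(G)\<close> it cannot revisit a point within \<open>|X|\<close> steps.\<close>
lemma exists_nsum_eq_if_unique_start:
  fixes X :: "'a::ab_group_add set"
  assumes fin: "finite X" and "d \<noteq> 0" and small: "enat (card X) < pG TYPE('a)" and "x \<in> X"
    and start: "\<And>w. w \<in> X \<Longrightarrow> w - d \<notin> X \<Longrightarrow> w = x1"
  shows "\<exists>j<card X. x = x1 + nsum j d"
proof (rule ccontr)
  assume far: "\<not> ?thesis"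
  have "x + nsum j (- d) \<in> X" if "j \<le> card X" for j
    using that
  proof (induction j)
    case (Suc j)
    then have "x + nsum j (- d) \<in> X" "x + nsum j (- d) \<noteq> x1"
      using far by (auto simp: nsum_uminus diff_eq_eq)
    then have "x + nsum j (- d) - d \<in> X" using start by blast
    then show ?case by (simp add: nsum_Suc add_diff_eq)
  qed (use \<open>x \<in> X\<close> in simp)
  then have "card ((\<lambda>j. x + nsum j (- d)) ` {..card X}) \<le> card X"
    by (intro card_mono[OF fin]) auto
  moreover have "inj_on (\<lambda>j. x + nsum j (- d)) {..card X}"
    using \<open>d \<noteq> 0\<close> small by (intro inj_on_nsum) auto
  ultimately show False by (simp add: card_image)
qed

text \<open>If \<open>X - d\<close> adds only one new element to \<open>X\<close>, then \<open>X\<close> is a single \<open>d\<close>-chain starting at the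
  unique \<open>x\<^sub>1 \<in> X\<close> with \<open>x\<^sub>1 - d \<notin> X\<close>.\<close>
lemma arith_prog_with_diff_if_card_union_translate:
  fixes X :: "'a::ab_group_add set"
  assumes fin: "finite X" and ne: "X \<noteq> {}" and "d \<noteq> 0" and small: "enat (card X) < pG TYPE('a)"
    and grow: "card (X \<union> (\<lambda>x. x - d) ` X) \<le> card X + 1"
  shows "arith_prog_with_diff d X"
proof -
  have "\<not> (\<forall>x\<in>X. x + (- d) \<in> X)"
    using pG_le_card_if_translation_closed[OF fin _ _, of _ "- d"] ne \<open>d \<noteq> 0\<close> small
    by (metis all_not_in_conv leD neg_equal_0_iff_equal)
  then obtain x1 where x1: "x1 \<in> X" "x1 - d \<notin> X" by auto
  have "card ((\<lambda>x. x - d) ` X - X) \<le> 1"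
    using grow card_Un_disjoint[of X "(\<lambda>x. x - d) ` X - X"] fin by simp
  then have start: "w = x1" if "w \<in> X" "w - d \<notin> X" for w
  proof -
    have "w - d \<in> (\<lambda>x. x - d) ` X - X" "x1 - d \<in> (\<lambda>x. x - d) ` X - X"
      using that x1 by auto
    then have "w - d = x1 - d"
      using \<open>card ((\<lambda>x. x - d) ` X - X) \<le> 1\<close> card_le_Suc0_iff_eq fin by (metis One_nat_def finite_Diff finite_imageI)
    then show ?thesis by simp
  qed
  have "X \<subseteq> (\<lambda>j. x1 + nsum j d) ` {..<card X}"
    using exists_nsum_eq_if_unique_start[OF fin \<open>d \<noteq> 0\<close> small _ start] by blast
  moreover have "card ((\<lambda>j. x1 + nsum j d) ` {..<card X}) \<le> card X"
    using card_image_le[of "{..<card X}"] by simp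
  ultimately show ?thesis
    unfolding arith_prog_with_diff_def using card_seteq by blast
qed

text \<open>Cauchy--Davenport applied to \<open>(X \<union> (X - d)) + Z\<close>.\<close>
lemma arith_prog_with_diff_if_card_set_plus_union_translate:
  fixes X Z :: "'a::ab_group_add set"
  assumes fin: "finite X" "finite Z" and ne: "X \<noteq> {}" "Z \<noteq> {}" and "d \<noteq> 0"
    and bound: "card ((X \<union> (\<lambda>x. x - d) ` X) + Z) \<le> card X + card Z"
    and small: "enat (card ((X \<union> (\<lambda>x. x - d) ` X) + Z)) < pG TYPE('a)"
  shows "arith_prog_with_diff d X"
proof -
  define X' where "X' = X \<union> (\<lambda>x. x - d) ` X"
  have fin': "finite X'" and "X \<subseteq> X'" unfolding X'_def using fin by auto
  have "card X' + card Z \<le> card (X' + Z) + 1"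
    using fin' fin(2) ne small \<open>X \<subseteq> X'\<close> unfolding X'_def by (intro cauchy_davenport) auto
  then have grow: "card X' \<le> card X + 1" using bound unfolding X'_def by linarith
  obtain z where "z \<in> Z" using ne by blast
  then have "card X \<le> card (X' + Z)"
    using card_mono[OF fin' \<open>X \<subseteq> X'\<close>] card_le_card_set_plus[OF fin' fin(2)] by fastforce
  then have "enat (card X) < pG TYPE('a)" using small unfolding X'_def by (rule enat_le_less_trans)
  from arith_prog_with_diff_if_card_union_translate[OF fin(1) ne(1) \<open>d \<noteq> 0\<close> this] grow
  show ?thesis unfolding X'_def .
qed

lemma arith_prog_with_diff_set_plus:
  fixes X Y :: "'a::ab_group_add set"
  assumes "arith_prog_with_diff d X" "arith_prog_with_diff d Y"
    and crit: "card (X + Y) + 1 = card X + card Y"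
  shows "arith_prog_with_diff d (X + Y)"
proof -
  define m n where "m = card X" and "n = card Y"
  obtain c1 where X: "X = (\<lambda>j. c1 + nsum j d) ` {..<m}"
    using assms(1) unfolding m_def by (rule arith_prog_with_diffE)
  obtain c2 where Y: "Y = (\<lambda>j. c2 + nsum j d) ` {..<n}"
    using assms(2) unfolding n_def by (rule arith_prog_with_diffE)
  define T where "T = (\<lambda>j. (c1 + c2) + nsum j d) ` {..<card (X + Y)}"
  have "X + Y \<subseteq> T"
  proof
    fix z assume "z \<in> X + Y"
    then obtain i j where "i < m" "j < n" "z = (c1 + nsum i d) + (c2 + nsum j d)"
      unfolding X Y by (auto elim: set_plus_elim)
    moreover from this have "i + j < card (X + Y)" using crit m_def n_def by linarith
    ultimately show "z \<in> T"
      unfolding T_def by (intro image_eqI[where x = "i + j"]) (auto simp: nsum_add algebra_simps)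
  qed
  moreover have "card T \<le> card (X + Y)" unfolding T_def using card_image_le[of "{..<card (X + Y)}"] by simp
  ultimately have "X + Y = T" by (intro card_seteq) (auto simp: T_def)
  then show ?thesis unfolding arith_prog_with_diff_def T_def by blast
qed

lemma arith_prog_with_diff_left_of_set_plus:
  fixes X Y :: "'a::ab_group_add set"
  assumes fin: "finite X" "finite Y" and ne: "X \<noteq> {}" "Y \<noteq> {}" and "d \<noteq> 0"
    and ap: "arith_prog_with_diff d (X + Y)"
    and crit: "card (X + Y) + 1 = card X + card Y"
    and small: "enat (card (X + Y) + 1) < pG TYPE('a)"
  shows "arith_prog_with_diff d X"
proof -
  define s where "s = card (X + Y)"
  obtain c where XY: "X + Y = (\<lambda>j. c + nsum j d) ` {..<s}"
    using ap unfolding s_def by (rule arith_prog_with_diffE)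
  define T where "T = (\<lambda>j. (c - d) + nsum j d) ` {..<s + 1}"
  have "(X \<union> (\<lambda>x. x - d) ` X) + Y \<subseteq> T"
  proof
    fix z assume "z \<in> (X \<union> (\<lambda>x. x - d) ` X) + Y"
    then obtain u y where "z = u + y" "u \<in> X \<union> (\<lambda>x. x - d) ` X" "y \<in> Y" by (rule set_plus_elim)
    then obtain x where "x \<in> X" "y \<in> Y" and z: "z = x + y \<or> z = (x + y) - d"
      by (auto simp: algebra_simps)
    then have "x + y \<in> X + Y" by blast
    then obtain j where j: "j < s" "x + y = c + nsum j d"
      unfolding XY by blast
    have "x + y = (c - d) + nsum (Suc j) d" "x + y - d = (c - d) + nsum j d"
      using j(2) by (simp_all add: nsum_Suc algebra_simps)
    moreover have "Suc j \<in> {..<s + 1}" "j \<in> {..<s + 1}" using j(1) by auto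
    ultimately show "z \<in> T" using z unfolding T_def by blast
  qed
  moreover have "card T \<le> s + 1"
    unfolding T_def using card_image_le[of "{..<s + 1}"] by simp
  ultimately have "card ((X \<union> (\<lambda>x. x - d) ` X) + Y) \<le> s + 1"
    using card_mono[of T] unfolding T_def by (meson finite_imageI finite_lessThan le_trans)
  then show ?thesis
    using fin ne \<open>d \<noteq> 0\<close> crit enat_le_less_trans[OF _ small]
    unfolding s_def by (intro arith_prog_with_diff_if_card_set_plus_union_translate) auto
qed

lemma arith_prog_with_diff_left_of_right:
  fixes X Y :: "'a::ab_group_add set"
  assumes fin: "finite X" and ne: "X \<noteq> {}" and ap: "arith_prog_with_diff d Y" and two: "2 \<le> card Y"
    and crit: "card (X + Y) + 1 = card X + card Y"
    and small: "enat (card (X + Y)) < pG TYPE('a)"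
  shows "arith_prog_with_diff d X"
proof -
  define k where "k = card Y"
  obtain c where Y: "Y = (\<lambda>j. c + nsum j d) ` {..<k}"
    using ap unfolding k_def by (rule arith_prog_with_diffE)
  have finY: "finite Y" using Y by simp
  have "d \<noteq> 0"
  proof
    assume "d = 0"
    then have "card Y \<le> card {c}" unfolding Y by (intro card_mono) (auto simp: nsum_def)
    then show False using two by simp
  qed
  define Y' where "Y' = {y \<in> Y. y - d \<in> Y}"
  have "Y - {c} \<subseteq> Y'"
  proof
    fix y assume "y \<in> Y - {c}"
    then obtain j where "j < k" "y = c + nsum j d" "y \<noteq> c" unfolding Y by auto
    moreover from this obtain i where "j = Suc i" by (cases j) auto
    ultimately have "y - d = c + nsum i d" "i < k" by (simp_all add: nsum_Suc)
    then have "y - d \<in> Y" unfolding Y by blast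
    with \<open>y \<in> Y - {c}\<close> show "y \<in> Y'" unfolding Y'_def by blast
  qed
  then have card_Y': "card Y \<le> card Y' + 1"
    using card_mono[of Y' "Y - {c}"] finY card_Diff_singleton_if[of Y c]
    by (auto simp: Y'_def split: if_splits)
  have "(X \<union> (\<lambda>x. x - d) ` X) + Y' \<subseteq> X + Y"
  proof
    fix z assume "z \<in> (X \<union> (\<lambda>x. x - d) ` X) + Y'"
    then obtain u y where "z = u + y" "u \<in> X \<union> (\<lambda>x. x - d) ` X" "y \<in> Y" "y - d \<in> Y"
      unfolding Y'_def by (auto elim!: set_plus_elim)
    then obtain x where "x \<in> X" "z = x + y \<or> z = x + (y - d)"
      by (auto simp: algebra_simps)
    with \<open>y \<in> Y\<close> \<open>y - d \<in> Y\<close> show "z \<in> X + Y" by blast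
  qed
  then have "card ((X \<union> (\<lambda>x. x - d) ` X) + Y') \<le> card (X + Y)"
    using card_mono[OF finite_set_plus[OF fin finY]] by blast
  moreover have "Y' \<noteq> {}" using card_Y' two by auto
  ultimately show ?thesis
    using fin ne finY \<open>d \<noteq> 0\<close> crit card_Y' enat_le_less_trans[OF _ small]
    by (intro arith_prog_with_diff_if_card_set_plus_union_translate[of X Y']) (auto simp: Y'_def)
qed

section \<open>Vosper's theorem below \<open>p(G)\<close>\<close>

text \<open>Three translates of \<open>Y\<close> inside \<open>Y + Y\<close> pairwise share at most one element.\<close>
lemma double_card_le_card_set_plus_self:
  fixes Y :: "'a::ab_group_add set"
  assumes fin: "finite Y" and three: "3 \<le> card Y"
    and unique_diff: "\<And>\<delta> y1 y2. \<delta> \<noteq> 0 \<Longrightarrow> y1 \<in> Y \<Longrightarrow> y2 \<in> Y \<Longrightarrow> y1 + \<delta> \<in> Y \<Longrightarrow> y2 + \<delta> \<in> Y \<Longrightarrow> y1 = y2"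
  shows "2 * card Y \<le> card (Y + Y)"
proof -
  obtain a b c where abc: "a \<in> Y" "b \<in> Y" "c \<in> Y" "a \<noteq> b" "a \<noteq> c" "b \<noteq> c"
    using three by (auto simp: numeral_3_eq_3 card_le_Suc_iff)
  define T where "T u = (\<lambda>y. y + u) ` Y" for u
  have card_T: "card (T u) = card Y" for u unfolding T_def by (simp add: card_image)
  have fin_T: "finite (T u)" for u unfolding T_def using fin by simp
  have meet: "card (T u \<inter> T v) \<le> 1" if "u \<noteq> v" for u v
  proof -
    have "z = z'" if zz: "z \<in> T u \<inter> T v" "z' \<in> T u \<inter> T v" for z z'
    proof -
      obtain y1 y2 where "y1 \<in> Y" "y2 \<in> Y" "z = y1 + u" "z = y2 + v"
        using zz(1) unfolding T_def by blast
      moreover obtain y1' y2' where "y1' \<in> Y" "y2' \<in> Y" "z' = y1' + u" "z' = y2' + v"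
        using zz(2) unfolding T_def by blast
      ultimately have "y2 = y2'"
        using unique_diff[of "v - u" y2 y2'] \<open>u \<noteq> v\<close> by (auto simp: algebra_simps)
      with \<open>z = y2 + v\<close> \<open>z' = y2' + v\<close> show ?thesis by simp
    qed
    then show ?thesis using card_le_Suc0_iff_eq fin_T by (metis One_nat_def finite_Int)
  qed
  have "card (T a \<union> T b) + card (T a \<inter> T b) = 2 * card Y"
    using card_Un_Int[OF fin_T fin_T] card_T by simp
  moreover have "card (T a \<union> T b \<union> T c) + card ((T a \<union> T b) \<inter> T c) = card (T a \<union> T b) + card Y"
    using card_Un_Int[of "T a \<union> T b" "T c"] fin_T card_T by simp
  moreover have "card ((T a \<union> T b) \<inter> T c) \<le> 2"
    using card_Un_le[of "T a \<inter> T c" "T b \<inter> T c"] meet[OF abc(5)] meet[OF abc(6)]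
    by (simp add: Int_Un_distrib2)
  moreover have "card (T a \<union> T b \<union> T c) \<le> card (Y + Y)"
    using abc fin by (intro card_mono finite_set_plus) (auto simp: T_def)
  ultimately show ?thesis using meet[OF abc(4)] three by linarith
qed

definition additive_energy :: "'a::ab_group_add set \<Rightarrow> 'a set \<Rightarrow> nat" where
  "additive_energy X Y =
     card {((x, y), (x', y')). x \<in> X \<and> y \<in> Y \<and> x' \<in> X \<and> y' \<in> Y \<and> x + y = x' + y'}"

text \<open>Cauchy--Schwarz over the fibres of \<open>(x, y) \<mapsto> x + y\<close>.\<close>
lemma additive_energy_lower_bound:
  fixes X Y :: "'a::ab_group_add set"
  assumes fin: "finite X" "finite Y"
  shows "(card X * card Y)\<^sup>2 \<le> card (X + Y) * additive_energy X Y"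
proof -
  define r where "r z = {p \<in> X \<times> Y. fst p + snd p = z}" for z
  have fin_r: "finite (r z)" for z unfolding r_def using fin by simp
  have "X \<times> Y = (\<Union>z\<in>X + Y. r z)" unfolding r_def by (auto elim!: set_plus_elim)
  then have "card X * card Y = card (\<Union>z\<in>X + Y. r z)" by (metis card_cartesian_product)
  also have "\<dots> = (\<Sum>z\<in>X + Y. card (r z))"
    by (rule card_UN_disjoint) (auto simp: fin finite_set_plus fin_r r_def)
  finally have pairs: "card X * card Y = (\<Sum>z\<in>X + Y. card (r z))" .
  have "{((x, y), (x', y')). x \<in> X \<and> y \<in> Y \<and> x' \<in> X \<and> y' \<in> Y \<and> x + y = x' + y'}
      = (\<Union>z\<in>X + Y. r z \<times> r z)"
    unfolding r_def by (auto elim!: set_plus_elim)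
  then have "additive_energy X Y = card (\<Union>z\<in>X + Y. r z \<times> r z)"
    unfolding additive_energy_def by simp
  also have "\<dots> = (\<Sum>z\<in>X + Y. (card (r z))\<^sup>2)"
    by (subst card_UN_disjoint) (auto simp: fin finite_set_plus fin_r r_def card_cartesian_product power2_eq_square)
  finally have energy: "additive_energy X Y = (\<Sum>z\<in>X + Y. (card (r z))\<^sup>2)" .
  have "real ((\<Sum>z\<in>X + Y. card (r z))\<^sup>2) \<le> real (card (X + Y) * (\<Sum>z\<in>X + Y. (card (r z))\<^sup>2))"
    using sum_squared_le_sum_of_squares[of "\<lambda>z. real (card (r z))" "X + Y"] by (simp add: mult.commute)
  then show ?thesis unfolding pairs energy by linarith
qed

lemma additive_energy_le_of_coincidences:
  fixes X Y E :: "'a::ab_group_add set"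
  assumes fin: "finite X" "finite Y" "finite E"
    and coincide: "\<And>x y x' y'. x \<in> X \<Longrightarrow> y \<in> Y \<Longrightarrow> x' \<in> X \<Longrightarrow> y' \<in> Y \<Longrightarrow> x + y = x' + y' \<Longrightarrow>
      (x, y) \<noteq> (x', y') \<Longrightarrow> x - y' \<in> E \<and> y \<noteq> y'"
  shows "additive_energy X Y \<le> card X * card Y + card E * (card Y * card Y - card Y)"
proof -
  define Off where "Off = Y \<times> Y - (\<lambda>y. (y, y)) ` Y"
  define g :: "'a \<times> 'a \<times> 'a \<Rightarrow> ('a \<times> 'a) \<times> 'a \<times> 'a"
    where "g = (\<lambda>(e, y, y'). ((y' + e, y), (y + e, y')))"
  have fin_Off: "finite Off" unfolding Off_def using fin by simp
  have card_Off: "card Off = card Y * card Y - card Y"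
    unfolding Off_def using fin
    by (subst card_Diff_subset) (auto simp: card_cartesian_product card_image inj_on_def)
  have "{((x, y), (x', y')). x \<in> X \<and> y \<in> Y \<and> x' \<in> X \<and> y' \<in> Y \<and> x + y = x' + y'}
      \<subseteq> (\<lambda>p. (p, p)) ` (X \<times> Y) \<union> g ` (E \<times> Off)"
  proof clarify
    fix x y x' y' assume q: "x \<in> X" "y \<in> Y" "x' \<in> X" "y' \<in> Y" "x + y = x' + y'"
      and "((x, y), (x', y')) \<notin> g ` (E \<times> Off)"
    show "((x, y), (x', y')) \<in> (\<lambda>p. (p, p)) ` (X \<times> Y)"
    proof (cases "(x, y) = (x', y')")
      case False
      then have "x - y' \<in> E" "y \<noteq> y'" using coincide q by blast+
      moreover have "g (x - y', y, y') = ((x, y), (x', y'))"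
        unfolding g_def using q(5) by (simp add: algebra_simps)
      ultimately have "((x, y), (x', y')) \<in> g ` (E \<times> Off)"
        using q(2,4) unfolding Off_def by (metis (no_types, lifting) DiffI SigmaI imageE image_eqI prod.inject)
      with \<open>((x, y), (x', y')) \<notin> g ` (E \<times> Off)\<close> show ?thesis by contradiction
    qed (use q in auto)
  qed
  then have "additive_energy X Y \<le> card ((\<lambda>p. (p, p)) ` (X \<times> Y) \<union> g ` (E \<times> Off))"
    unfolding additive_energy_def using fin fin_Off by (intro card_mono) auto
  also have "\<dots> \<le> card (X \<times> Y) + card (E \<times> Off)"
    by (intro order.trans[OF card_Un_le] add_mono card_image_le) (use fin fin_Off in auto)
  finally show ?thesis by (simp add: card_cartesian_product card_Off)
qed

text \<open>Since \<open>(n + k - 1)(n - k + 1) = n\<^sup>2 - (k - 1)\<^sup>2\<close>.\<close>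
lemma energy_bound_lt_square:
  fixes n k e :: int
  assumes "2 \<le> k" "0 \<le> e" "e + k \<le> n"
  shows "(n + k - 1) * (n * k + e * (k * k - k)) < (n * k)\<^sup>2"
proof -
  have "0 \<le> k * k - k" using assms(1) by (simp add: mult_le_cancel_right1)
  then have "(n + k - 1) * (n * k + e * (k * k - k)) \<le> (n + k - 1) * (n * k + (n - k) * (k * k - k))"
    using assms by (intro mult_left_mono add_left_mono mult_right_mono) auto
  also have "\<dots> = (n * k)\<^sup>2 - (k * (k - 1))\<^sup>2"
    by (simp add: power2_eq_square algebra_simps)
  also have "\<dots> < (n * k)\<^sup>2"
    using assms(1) by simp
  finally show ?thesis .
qed

lemma two_le_card_if_distinct:
  assumes "finite S" "a \<in> S" "b \<in> S" "a \<noteq> b"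
  shows "2 \<le> card S"
proof -
  have "card {a, b} \<le> card S" using assms by (intro card_mono) auto
  with assms(4) show ?thesis by simp
qed

definition shifts_into :: "'a::ab_group_add set \<Rightarrow> 'a set \<Rightarrow> 'a set" where
  "shifts_into Y X = {e. \<forall>y\<in>Y. y + e \<in> X}"

lemma finite_shifts_into:
  fixes X Y :: "'a::ab_group_add set"
  assumes "finite X" "y \<in> Y"
  shows "finite (shifts_into Y X)" and "card (shifts_into Y X) \<le> card X"
proof -
  have "shifts_into Y X \<subseteq> (\<lambda>x. x - y) ` X"
  proof
    fix e assume "e \<in> shifts_into Y X"
    then have "y + e \<in> X" using \<open>y \<in> Y\<close> unfolding shifts_into_def by blast
    then show "e \<in> (\<lambda>x. x - y) ` X" by (rule image_eqI[rotated]) simp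
  qed
  then show "finite (shifts_into Y X)" "card (shifts_into Y X) \<le> card X"
    using finite_subset card_mono card_image_le assms(1) by (blast, meson finite_imageI order_trans)
qed

text \<open>If no Dyson transform of \<open>(X, Y)\<close> is proper, the shifts \<open>e\<close> with \<open>Y + e \<subseteq> X\<close> account
  for every coincidence \<open>x + y = x' + y'\<close>.\<close>
context
  fixes X Y :: "'a::ab_group_add set"
  assumes fin: "finite X" "finite Y"
    and no_proper_transform: "\<And>e. 2 \<le> card {y \<in> Y. y + e \<in> X} \<Longrightarrow> {y \<in> Y. y + e \<in> X} = Y"
begin

lemma mem_shifts_into_if_two:
  assumes "a \<in> Y" "b \<in> Y" "a \<noteq> b" "a + e \<in> X" "b + e \<in> X"
  shows "e \<in> shifts_into Y X"
  using no_proper_transform[of e] two_le_card_if_distinct[of "{y \<in> Y. y + e \<in> X}" a b] assms fin(2)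
  unfolding shifts_into_def by auto

lemma coincidence_mem_shifts_into:
  assumes "x \<in> X" "y \<in> Y" "x' \<in> X" "y' \<in> Y" "x + y = x' + y'" "(x, y) \<noteq> (x', y')"
  shows "x - y' \<in> shifts_into Y X \<and> y \<noteq> y'"
proof -
  have "y \<noteq> y'" using assms by auto
  moreover have "y + (x - y') = x'" using assms(5) by (simp add: algebra_simps)
  ultimately show ?thesis using mem_shifts_into_if_two[of y y' "x - y'"] assms by simp
qed

lemma shifts_into_nonempty:
  assumes "2 \<le> card X" "3 \<le> card Y" and crit: "card (X + Y) + 1 = card X + card Y"
  shows "shifts_into Y X \<noteq> {}"
proof -
  have "2 * card Y \<le> card X * card Y" "3 * card X \<le> card X * card Y"
    using assms(1,2) by simp_all
  then have "card (X + Y) < card X * card Y"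
    using crit by linarith
  then have "card (X + Y) < card (X \<times> Y)" by (simp add: card_cartesian_product)
  then have "\<not> inj_on (\<lambda>(x, y). x + y) (X \<times> Y)"
    by (metis card_image less_irrefl set_plus_image)
  then obtain x y x' y' where "x \<in> X" "y \<in> Y" "x' \<in> X" "y' \<in> Y" "x + y = x' + y'" "(x, y) \<noteq> (x', y')"
    unfolding inj_on_def by auto
  then show ?thesis using coincidence_mem_shifts_into by blast
qed

text \<open>A repeated nonzero difference \<open>\<delta>\<close> of \<open>Y\<close> would make the shifts invariant under \<open>+ \<delta>\<close>.\<close>
lemma eq_if_same_difference:
  assumes ne: "shifts_into Y X \<noteq> {}" and small: "enat (card X) < pG TYPE('a)"
    and "\<delta> \<noteq> 0" "y1 \<in> Y" "y2 \<in> Y" "y1 + \<delta> \<in> Y" "y2 + \<delta> \<in> Y"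
  shows "y1 = y2"
proof (rule ccontr)
  assume "y1 \<noteq> y2"
  have "e + \<delta> \<in> shifts_into Y X" if "e \<in> shifts_into Y X" for e
  proof (rule mem_shifts_into_if_two[OF assms(4,5) \<open>y1 \<noteq> y2\<close>])
    have "(y1 + \<delta>) + e \<in> X" "(y2 + \<delta>) + e \<in> X"
      using that assms(6,7) unfolding shifts_into_def by blast+
    then show "y1 + (e + \<delta>) \<in> X" "y2 + (e + \<delta>) \<in> X"
      by (simp_all add: add.assoc add.commute[of \<delta>])
  qed
  then have "pG TYPE('a) \<le> enat (card (shifts_into Y X))"
    using ne assms(4) fin(1) finite_shifts_into(1)
    by (metis all_not_in_conv pG_le_card_if_translation_closed \<open>\<delta> \<noteq> 0\<close>)
  moreover have "enat (card (shifts_into Y X)) < pG TYPE('a)"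
    using finite_shifts_into(2)[OF fin(1) assms(4)] by (rule enat_le_less_trans[OF _ small])
  ultimately show False by simp
qed

text \<open>Cauchy--Davenport for \<open>shifts_into Y X + (Y + Y) \<subseteq> X + Y\<close>, where \<open>|Y + Y| \<ge> 2|Y|\<close>.\<close>
lemma card_shifts_into_add_card_le:
  assumes two: "2 \<le> card X" and three: "3 \<le> card Y"
    and crit: "card (X + Y) + 1 = card X + card Y"
    and small: "enat (card (X + Y)) < pG TYPE('a)"
  shows "card (shifts_into Y X) + card Y \<le> card X"
proof -
  define E where "E = shifts_into Y X"
  obtain y0 where "y0 \<in> Y" using three by fastforce
  have fin_E: "finite E" unfolding E_def using finite_shifts_into(1)[OF fin(1) \<open>y0 \<in> Y\<close>] .
  have "E \<noteq> {}" unfolding E_def using shifts_into_nonempty[OF two three crit] .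
  have "enat (card X) < pG TYPE('a)"
    using card_le_card_set_plus[OF fin \<open>y0 \<in> Y\<close>] by (rule enat_le_less_trans[OF _ small])
  then have "2 * card Y \<le> card (Y + Y)"
    using double_card_le_card_set_plus_self[OF fin(2) three] eq_if_same_difference \<open>E \<noteq> {}\<close>
    unfolding E_def by blast
  moreover have sub: "E + (Y + Y) \<subseteq> X + Y"
  proof
    fix z assume "z \<in> E + (Y + Y)"
    then obtain e w where "e \<in> E" "w \<in> Y + Y" "z = e + w" by (rule set_plus_elim)
    moreover from \<open>w \<in> Y + Y\<close> obtain y y' where "y \<in> Y" "y' \<in> Y" "w = y + y'" by (rule set_plus_elim)
    ultimately have "e \<in> E" "y \<in> Y" "y' \<in> Y" "z = (y + e) + y'" by (simp_all add: algebra_simps)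
    then show "z \<in> X + Y" unfolding E_def shifts_into_def by blast
  qed
  then have "card (E + (Y + Y)) \<le> card (X + Y)"
    using card_mono[OF finite_set_plus[OF fin]] by blast
  moreover from this have "card E + card (Y + Y) \<le> card (E + (Y + Y)) + 1"
    using fin fin_E \<open>E \<noteq> {}\<close> \<open>y0 \<in> Y\<close> enat_le_less_trans[OF _ small]
    by (intro cauchy_davenport finite_set_plus) auto
  ultimately show ?thesis using crit unfolding E_def by linarith
qed

end

text \<open>If no Dyson transform were proper, the additive energy of \<open>(X, Y)\<close> would be too small
  for \<open>X + Y\<close> to be critical.\<close>
lemma exists_proper_dyson_transform:
  fixes X Y :: "'a::ab_group_add set"
  assumes fin: "finite X" "finite Y" and two: "2 \<le> card X" and three: "3 \<le> card Y"
    and crit: "card (X + Y) + 1 = card X + card Y"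
    and small: "enat (card (X + Y)) < pG TYPE('a)"
  shows "\<exists>e. 2 \<le> card {y \<in> Y. y + e \<in> X} \<and> card {y \<in> Y. y + e \<in> X} < card Y"
proof (rule ccontr)
  assume "\<not> ?thesis"
  then have no_proper: "{y \<in> Y. y + e \<in> X} = Y" if "2 \<le> card {y \<in> Y. y + e \<in> X}" for e
    using that card_mono[OF fin(2), of "{y \<in> Y. y + e \<in> X}"] card_subset_eq[OF fin(2)]
    by (metis (no_types, lifting) le_neq_implies_less mem_Collect_eq subsetI)
  obtain y0 where "y0 \<in> Y" using three by fastforce
  have "(card X * card Y)\<^sup>2
      \<le> card (X + Y) * (card X * card Y + card (shifts_into Y X) * (card Y * card Y - card Y))"
    using order_trans[OF additive_energy_lower_bound[OF fin] mult_le_mono2[OF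
          additive_energy_le_of_coincidences[OF fin finite_shifts_into(1)[OF fin(1) \<open>y0 \<in> Y\<close>]
            coincidence_mem_shifts_into[OF fin no_proper]]]] .
  then have "int ((card X * card Y)\<^sup>2) \<le> int (card (X + Y))
      * (int (card X * card Y) + int (card (shifts_into Y X)) * int (card Y * card Y - card Y))"
    by (metis of_nat_add of_nat_le_iff of_nat_mult)
  moreover define n k e where "n = int (card X)" and "k = int (card Y)" and "e = int (card (shifts_into Y X))"
  moreover have "int (card (X + Y)) = n + k - 1" using crit unfolding n_def k_def by linarith
  moreover have "int (card Y * card Y - card Y) = k * k - k" unfolding k_def by simp
  ultimately have "(n * k)\<^sup>2 \<le> (n + k - 1) * (n * k + e * (k * k - k))"
    by (simp add: power_mult_distrib)
  moreover have "(n + k - 1) * (n * k + e * (k * k - k)) < (n * k)\<^sup>2"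
    using three card_shifts_into_add_card_le[OF fin no_proper two three crit small]
    unfolding n_def k_def e_def by (intro energy_bound_lt_square) auto
  ultimately show False by simp
qed

lemma vosper_card_2:
  fixes X :: "'a::ab_group_add set"
  assumes fin: "finite X" and ne: "X \<noteq> {}" and "y1 \<noteq> y2"
    and crit: "card (X + {y1, y2}) = card X + 1"
    and small: "enat (card (X + {y1, y2})) < pG TYPE('a)"
  shows "arith_prog_with_diff (y1 - y2) X" and "arith_prog_with_diff (y1 - y2) {y1, y2}"
proof -
  define d where "d = y1 - y2"
  have "X + {y1, y2} = (X \<union> (\<lambda>x. x - d) ` X) + {y1}"
  proof (intro equalityI subsetI)
    fix z assume "z \<in> X + {y1, y2}"
    then obtain x y where "x \<in> X" "y \<in> {y1, y2}" "z = x + y" by (rule set_plus_elim)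
    moreover have "x - d \<in> X \<union> (\<lambda>x. x - d) ` X" "x + y2 = (x - d) + y1"
      using \<open>x \<in> X\<close> by (auto simp: d_def)
    ultimately show "z \<in> (X \<union> (\<lambda>x. x - d) ` X) + {y1}"
      by (metis UnI1 insertE set_plus_intro singletonD singletonI)
  next
    fix z assume "z \<in> (X \<union> (\<lambda>x. x - d) ` X) + {y1}"
    then obtain u where "u \<in> X \<union> (\<lambda>x. x - d) ` X" "z = u + y1"
      by (metis set_plus_elim singletonD)
    moreover have "(x - d) + y1 \<in> X + {y1, y2}" if "x \<in> X" for x
      using that set_plus_intro[of x X y2 "{y1, y2}"] by (simp add: d_def)
    ultimately show "z \<in> X + {y1, y2}" by blast
  qed
  moreover have "d \<noteq> 0" using \<open>y1 \<noteq> y2\<close> by (simp add: d_def)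
  ultimately have "arith_prog_with_diff d X"
    using fin ne crit small by (intro arith_prog_with_diff_if_card_set_plus_union_translate[of X "{y1}"]) auto
  then show "arith_prog_with_diff (y1 - y2) X" by (simp add: d_def)
  have "{..<card {y1, y2}} = {0, 1}" using \<open>y1 \<noteq> y2\<close> by auto
  then have "{y1, y2} = (\<lambda>j. y2 + nsum j (y1 - y2)) ` {..<card {y1, y2}}"
    by (simp add: nsum_Suc insert_commute)
  then show "arith_prog_with_diff (y1 - y2) {y1, y2}"
    unfolding arith_prog_with_diff_def by blast
qed

lemma set_plus_dyson_transform_eq:
  fixes X Y :: "'a::ab_group_add set"
  assumes fin: "finite X" "finite Y" and "{v \<in> Y. v + e \<in> X} \<noteq> {}"
    and crit: "card (X + Y) + 1 = card X + card Y"
    and small: "enat (card (X + Y)) < pG TYPE('a)"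
  shows "(X \<union> (\<lambda>v. v + e) ` Y) + {v \<in> Y. v + e \<in> X} = X + Y"
proof (rule card_seteq[OF finite_set_plus[OF fin] dyson_transform_subset])
  have "card (X \<union> (\<lambda>v. v + e) ` Y) + card {v \<in> Y. v + e \<in> X}
      \<le> card ((X \<union> (\<lambda>v. v + e) ` Y) + {v \<in> Y. v + e \<in> X}) + 1"
    using fin assms(3) enat_le_less_trans[OF card_mono[OF finite_set_plus[OF fin] dyson_transform_subset] small]
    by (intro cauchy_davenport) auto
  then show "card (X + Y) \<le> card ((X \<union> (\<lambda>v. v + e) ` Y) + {v \<in> Y. v + e \<in> X})"
    using card_dyson_transform[OF fin, of e] crit by linarith
qed

text \<open>Induction on \<open>|Y|\<close>: a proper Dyson transform \<open>(X', Y')\<close> has \<open>X' + Y' = X + Y\<close>, which by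
  induction is an arithmetic progression, and that forces \<open>X\<close> and \<open>Y\<close> to be progressions too.\<close>
theorem vosper:
  fixes X Y :: "'a::ab_group_add set"
  assumes "finite X" "finite Y" "2 \<le> card X" "2 \<le> card Y"
    and "card (X + Y) + 1 = card X + card Y"
    and "enat (card (X + Y) + 2) \<le> pG TYPE('a)"
  shows "\<exists>d. d \<noteq> 0 \<and> arith_prog_with_diff d X \<and> arith_prog_with_diff d Y"
  using assms
proof (induction "card Y" arbitrary: X Y rule: less_induct)
  case less
  note fin = less.prems(1,2) and two = less.prems(3,4) and crit = less.prems(5)
  have ne: "X \<noteq> {}" "Y \<noteq> {}" using two by auto
  have small: "enat (card (X + Y) + 1) < pG TYPE('a)"
    using less.prems(6) by (simp add: Suc_ile_eq)
  then have small0: "enat (card (X + Y)) < pG TYPE('a)" by (rule enat_le_less_trans[rotated]) simp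
  show ?case
  proof (cases "card Y = 2")
    case True
    then obtain y1 y2 where Y: "Y = {y1, y2}" "y1 \<noteq> y2" by (meson card_2_iff)
    then have "arith_prog_with_diff (y1 - y2) X" "arith_prog_with_diff (y1 - y2) Y"
      using vosper_card_2[OF fin(1) ne(1) \<open>y1 \<noteq> y2\<close>] crit small0 True by simp_all
    moreover have "y1 - y2 \<noteq> 0" using Y(2) by simp
    ultimately show ?thesis by blast
  next
    case False
    with two have three: "3 \<le> card Y" by simp
    obtain e where e: "2 \<le> card {y \<in> Y. y + e \<in> X}" "card {y \<in> Y. y + e \<in> X} < card Y"
      using exists_proper_dyson_transform[OF fin two(1) three crit small0] by blast
    define X' where "X' = X \<union> (\<lambda>v. v + e) ` Y"
    define Y' where "Y' = {v \<in> Y. v + e \<in> X}"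
    have "Y' \<noteq> {}" using e(1) unfolding Y'_def by (metis card.empty not_numeral_le_zero)
    then have same: "X' + Y' = X + Y"
      unfolding X'_def Y'_def by (rule set_plus_dyson_transform_eq[OF fin _ crit small0])
    have crit': "card (X' + Y') + 1 = card X' + card Y'"
      using same card_dyson_transform[OF fin, of e] crit unfolding X'_def Y'_def by simp
    have fin': "finite X'" "finite Y'" using fin by (auto simp: X'_def Y'_def)
    have two': "2 \<le> card X'" "2 \<le> card Y'"
      using two(1) card_mono[OF fin'(1), of X] e(1) by (auto simp: X'_def Y'_def)
    obtain d where d: "d \<noteq> 0" "arith_prog_with_diff d X'" "arith_prog_with_diff d Y'"
      using less.hyps[of Y' X'] e(2) fin' two' crit' less.prems(6) same by (auto simp: Y'_def)
    have "arith_prog_with_diff d (X + Y)"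
      using arith_prog_with_diff_set_plus[OF d(2,3) crit'] same by simp
    then have "arith_prog_with_diff d X" "arith_prog_with_diff d Y"
      using arith_prog_with_diff_left_of_set_plus[OF fin ne d(1) _ crit small]
        arith_prog_with_diff_left_of_set_plus[of Y X d] fin ne d(1) crit small
      by (simp_all add: add.commute)
    with d(1) show ?thesis by blast
  qed
qed

section \<open>Rows of multiplicities\<close>

lemma exists_inj_on_fiberwise:
  assumes "finite I" "finite J" and fibres: "\<And>v. card {i \<in> I. r i = v} \<le> card {j \<in> J. s j = v}"
  obtains g where "inj_on g I" "g ` I \<subseteq> J" "\<And>i. i \<in> I \<Longrightarrow> s (g i) = r i"
proof -
  have "\<forall>v. \<exists>h. h ` {i \<in> I. r i = v} \<subseteq> {j \<in> J. s j = v} \<and> inj_on h {i \<in> I. r i = v}"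
    using assms by (intro allI card_le_inj) auto
  then obtain h where h: "\<And>v. h v ` {i \<in> I. r i = v} \<subseteq> {j \<in> J. s j = v}"
    "\<And>v. inj_on (h v) {i \<in> I. r i = v}"
    by (auto dest!: choice)
  define g where "g i = h (r i) i" for i
  have g: "g i \<in> J" "s (g i) = r i" if "i \<in> I" for i
    using h(1)[of "r i"] that unfolding g_def by auto
  have "inj_on g I"
  proof (rule inj_onI)
    fix i i' assume "i \<in> I" "i' \<in> I" "g i = g i'"
    moreover from this have "r i = r i'" using g(2) by metis
    ultimately show "i = i'"
      unfolding g_def by (intro inj_onD[OF h(2)[of "r i"]]) simp_all
  qed
  then show ?thesis by (rule that) (use g in auto)
qed

definition row_count :: "nat \<Rightarrow> (nat \<Rightarrow> 'a set) \<Rightarrow> 'a \<Rightarrow> nat" where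
  "row_count l R v = card {i. i < l \<and> v \<in> R i}"

text \<open>A choice of one element per row uses each value \<open>v\<close> at most \<open>\<rho>\<^sub>v(a)\<close> times, so it is
  realised by \<open>l\<close> distinct indices of \<open>a\<close>.\<close>
lemma set_sum_subset_Sigma_l:
  fixes a :: "'a::ab_group_add list"
  assumes count: "\<And>v. row_count l R v \<le> rho v a"
  shows "(\<Sum>i<l. R i) \<subseteq> Sigma_l l a"
proof
  fix z assume "z \<in> (\<Sum>i<l. R i)"
  then obtain r where r: "\<And>i. i < l \<Longrightarrow> r i \<in> R i" and z: "z = (\<Sum>i<l. r i)"
    by (auto simp: set_sum_alt)
  have "card {i \<in> {..<l}. r i = v} \<le> card {j \<in> {..<length a}. a ! j = v}" for v
  proof -
    have "card {i \<in> {..<l}. r i = v} \<le> row_count l R v"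
      unfolding row_count_def using r by (intro card_mono) auto
    also have "\<dots> \<le> card {j \<in> {..<length a}. a ! j = v}"
      using count[of v] by (simp add: rho_def)
    finally show ?thesis .
  qed
  then obtain g where g: "inj_on g {..<l}" "g ` {..<l} \<subseteq> {..<length a}"
    "\<And>i. i \<in> {..<l} \<Longrightarrow> a ! g i = r i"
    by (rule exists_inj_on_fiberwise[rotated 2]) auto
  have "(\<Sum>j\<in>g ` {..<l}. a ! j) = z"
    using g unfolding z by (simp add: sum.reindex)
  moreover have "card (g ` {..<l}) = l" using card_image[OF g(1)] by simp
  ultimately show "z \<in> Sigma_l l a" unfolding Sigma_l_def using g(2) by blast
qed

lemma sum_card_eq_sum_row_count:
  assumes "finite B" "\<And>i. i < l \<Longrightarrow> R i \<subseteq> B"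
  shows "(\<Sum>i<l. card (R i)) = (\<Sum>v\<in>B. row_count l R v)"
proof -
  have "(\<Sum>i<l. card (R i)) = (\<Sum>i<l. \<Sum>v\<in>B. of_bool (v \<in> R i))"
    using assms by (intro sum.cong refl) (simp add: Int_absorb1 flip: sum.inter_filter[of B "\<lambda>_. 1"])
  also have "\<dots> = (\<Sum>v\<in>B. \<Sum>i<l. of_bool (v \<in> R i))"
    by (rule sum.swap)
  also have "\<dots> = (\<Sum>v\<in>B. row_count l R v)"
    unfolding row_count_def
    by (intro sum.cong refl) (simp add: lessThan_def Collect_conj_eq flip: sum.inter_filter[of "{..<l}" "\<lambda>_. 1"])
  finally show ?thesis .
qed

lemma finite_set_sum_lessThan:
  fixes R :: "nat \<Rightarrow> 'a::comm_monoid_add set"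
  shows "(\<And>i. i < j \<Longrightarrow> finite (R i)) \<Longrightarrow> finite (\<Sum>i<j. R i)"
  by (induction j) (simp_all add: finite_set_plus)

lemma set_sum_lessThan_nonempty:
  fixes R :: "nat \<Rightarrow> 'a::comm_monoid_add set"
  shows "(\<And>i. i < j \<Longrightarrow> R i \<noteq> {}) \<Longrightarrow> (\<Sum>i<j. R i) \<noteq> {}"
proof (induction j)
  case (Suc j)
  then have "(\<Sum>i<j. R i) \<noteq> {}" "R j \<noteq> {}" by simp_all
  then obtain x y where "x \<in> (\<Sum>i<j. R i)" "y \<in> R j" by blast
  then have "x + y \<in> (\<Sum>i<Suc j. R i)" by (simp add: set_plus_intro)
  then show ?case by blast
qed simp

lemma card_set_sum_lessThan_mono:
  fixes R :: "nat \<Rightarrow> 'a::ab_group_add set"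
  assumes rows: "\<And>i. i < l \<Longrightarrow> finite (R i) \<and> R i \<noteq> {}" and "j \<le> l"
  shows "card (\<Sum>i<j. R i) \<le> card (\<Sum>i<l. R i)"
  using \<open>j \<le> l\<close>
proof (induction rule: dec_induct)
  case (step n)
  then obtain y where "y \<in> R n" using rows by blast
  then have "card (\<Sum>i<n. R i) \<le> card ((\<Sum>i<n. R i) + R n)"
    using rows step.hyps by (intro card_le_card_set_plus finite_set_sum_lessThan) auto
  with step.IH show ?case by simp
qed simp

text \<open>By Cauchy--Davenport the \<open>slack\<close> defined in the proof never decreases along the rows;
  it is \<open>1\<close> for no rows and, by assumption, at most \<open>1\<close> for all \<open>l\<close> rows.\<close>
lemma critical_set_sum_lessThan:
  fixes R :: "nat \<Rightarrow> 'a::ab_group_add set"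
  assumes rows: "\<And>i. i < l \<Longrightarrow> finite (R i) \<and> R i \<noteq> {}"
    and small: "enat (card (\<Sum>i<l. R i)) < pG TYPE('a)"
    and total: "card (\<Sum>i<l. R i) + l \<le> (\<Sum>i<l. card (R i)) + 1"
    and "j \<le> l"
  shows "card (\<Sum>i<j. R i) + j = (\<Sum>i<j. card (R i)) + 1"
proof -
  define slack where "slack n = int (card (\<Sum>i<n. R i)) + int n - int (\<Sum>i<n. card (R i))" for n
  have grow: "slack n \<le> slack (Suc n)" if "n < l" for n
  proof -
    have "finite (\<Sum>i<n. R i)" "(\<Sum>i<n. R i) \<noteq> {}"
      using rows that by (auto intro!: finite_set_sum_lessThan set_sum_lessThan_nonempty)
    moreover have "enat (card ((\<Sum>i<n. R i) + R n)) < pG TYPE('a)"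
      using card_set_sum_lessThan_mono[of l R "Suc n"] rows that
      by (intro enat_le_less_trans[OF _ small]) simp
    ultimately have "card (\<Sum>i<n. R i) + card (R n) \<le> card ((\<Sum>i<n. R i) + R n) + 1"
      using rows that by (intro cauchy_davenport) auto
    then show ?thesis unfolding slack_def by simp
  qed
  have mono: "slack n \<le> slack m" if "n \<le> m" "m \<le> l" for n m
    using that
  proof (induction rule: dec_induct)
    case (step k)
    then show ?case using grow[of k] by simp
  qed simp
  have "slack 0 = 1" unfolding slack_def by simp
  moreover have "slack l \<le> 1" using total unfolding slack_def by linarith
  ultimately have "slack j = 1"
    using mono[of 0 j] mono[of j l] \<open>j \<le> l\<close> by simp
  then show ?thesis unfolding slack_def by linarith
qed

lemma finite_Sigma_l: "finite (Sigma_l l a)"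
proof (rule finite_subset)
  show "Sigma_l l a \<subseteq> (\<lambda>I. \<Sum>i\<in>I. a ! i) ` Pow {..<length a}"
    unfolding Sigma_l_def by auto
qed simp

definition admissible_rows :: "nat \<Rightarrow> 'a list \<Rightarrow> (nat \<Rightarrow> 'a set) \<Rightarrow> bool" where
  "admissible_rows l a R \<longleftrightarrow> (\<forall>i<l. R i \<noteq> {}) \<and> (\<forall>v. row_count l R v \<le> rho v a)"

lemma admissible_rows_subset_set:
  assumes "admissible_rows l a R" "i < l"
  shows "R i \<subseteq> set a"
proof
  fix v assume "v \<in> R i"
  then have "0 < row_count l R v"
    unfolding row_count_def using assms(2) by (auto simp: card_gt_0_iff)
  then have "0 < rho v a" using assms(1) unfolding admissible_rows_def by (meson order_less_le_trans)
  then show "v \<in> set a" unfolding rho_def by (auto simp: card_gt_0_iff in_set_conv_nth)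
qed

lemma critical_admissible_rows:
  fixes a :: "'a::ab_group_add list"
  assumes adm: "admissible_rows l a R"
    and small: "enat (card (Sigma_l l a)) < pG TYPE('a)"
    and total: "card (Sigma_l l a) + l \<le> (\<Sum>i<l. card (R i)) + 1"
    and "j \<le> l"
  shows "card (\<Sum>i<j. R i) + j = (\<Sum>i<j. card (R i)) + 1"
    and "card (\<Sum>i<j. R i) \<le> card (Sigma_l l a)"
proof -
  have rows: "finite (R i) \<and> R i \<noteq> {}" if "i < l" for i
    using admissible_rows_subset_set[OF adm that] adm that
    by (auto simp: admissible_rows_def intro: finite_subset)
  have "card (\<Sum>i<l. R i) \<le> card (Sigma_l l a)"
    using adm by (intro card_mono finite_Sigma_l set_sum_subset_Sigma_l) (simp add: admissible_rows_def)
  then show "card (\<Sum>i<j. R i) \<le> card (Sigma_l l a)"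
    using card_set_sum_lessThan_mono[of l R j] rows \<open>j \<le> l\<close> by simp
  show "card (\<Sum>i<j. R i) + j = (\<Sum>i<j. card (R i)) + 1"
    using \<open>card (\<Sum>i<l. R i) \<le> card (Sigma_l l a)\<close> rows total \<open>j \<le> l\<close>
    by (intro critical_set_sum_lessThan[of l R] enat_le_less_trans[OF _ small]) auto
qed

lemma critical_first_rows:
  fixes a :: "'a::ab_group_add list"
  assumes adm: "admissible_rows l a R" and "2 \<le> l"
    and small: "enat (card (Sigma_l l a)) < pG TYPE('a)"
    and total: "card (Sigma_l l a) + l \<le> (\<Sum>i<l. card (R i)) + 1"
  shows "card (R 0 + R 1) + 1 = card (R 0) + card (R 1)"
    and "card (R 0 + R 1) \<le> card (Sigma_l l a)"
  using critical_admissible_rows[OF adm small total \<open>2 \<le> l\<close>] by (simp_all add: numeral_2_eq_2)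

text \<open>Criticality of the first three rows gives \<open>|R\<^sub>0 + R\<^sub>1 + R\<^sub>2| = |R\<^sub>0 + R\<^sub>1| + |R\<^sub>2| - 1\<close>.\<close>
lemma card_first_rows_less_Sigma_l:
  fixes a :: "'a::ab_group_add list"
  assumes adm: "admissible_rows l a R" and "3 \<le> l" and "2 \<le> card (R 2)"
    and small: "enat (card (Sigma_l l a)) < pG TYPE('a)"
    and total: "card (Sigma_l l a) + l \<le> (\<Sum>i<l. card (R i)) + 1"
  shows "card (R 0 + R 1) < card (Sigma_l l a)"
proof -
  have "card (\<Sum>i<3. R i) + 3 = (\<Sum>i<3. card (R i)) + 1"
    "card (\<Sum>i<3. R i) \<le> card (Sigma_l l a)"
    using critical_admissible_rows[OF adm small total \<open>3 \<le> l\<close>] by simp_all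
  moreover have "card (R 0 + R 1) + 1 = card (R 0) + card (R 1)"
    using critical_first_rows[OF adm _ small total] \<open>3 \<le> l\<close> by simp
  ultimately show ?thesis
    using \<open>2 \<le> card (R 2)\<close> by (simp add: numeral_3_eq_3 numeral_2_eq_2)
qed

lemma row_count_move:
  assumes "i < l" "j < l" "i \<noteq> j" "z \<in> R i" "z \<notin> R j"
  shows "row_count l (R(i := R i - {z}, j := insert z (R j))) v = row_count l R v"
proof (cases "v = z")
  case True
  define S where "S = {k. k < l \<and> z \<in> R k}"
  have "{k. k < l \<and> z \<in> (R(i := R i - {z}, j := insert z (R j))) k} = insert j (S - {i})"
    using assms unfolding S_def by auto
  moreover have "finite S" "i \<in> S" "j \<notin> S - {i}" using assms unfolding S_def by auto
  then have "card (insert j (S - {i})) = card S"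
    by (metis card_Suc_Diff1 card_insert_disjoint finite_Diff)
  ultimately show ?thesis unfolding row_count_def True S_def by simp
next
  case False
  then show ?thesis unfolding row_count_def by (intro arg_cong[where f = card]) auto
qed

lemma admissible_rows_move:
  assumes adm: "admissible_rows l a R" and "i < l" "j < l" "i \<noteq> j" "z \<in> R i" "z \<notin> R j" "R i \<noteq> {z}"
  defines "R' \<equiv> R(i := R i - {z}, j := insert z (R j))"
  shows "admissible_rows l a R'" and "(\<Sum>k<l. card (R' k)) = (\<Sum>k<l. card (R k))"
proof -
  have count: "row_count l R' = row_count l R"
    unfolding R'_def using row_count_move[OF assms(2-6)] by blast
  have "R i - {z} \<noteq> {}" using \<open>z \<in> R i\<close> \<open>R i \<noteq> {z}\<close> by blast
  then show adm': "admissible_rows l a R'"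
    using adm count unfolding admissible_rows_def R'_def by auto
  show "(\<Sum>k<l. card (R' k)) = (\<Sum>k<l. card (R k))"
    using sum_card_eq_sum_row_count[of "set a" l R] sum_card_eq_sum_row_count[of "set a" l R']
      admissible_rows_subset_set[OF adm] admissible_rows_subset_set[OF adm'] count
    by simp
qed

definition mu_rows :: "nat \<Rightarrow> 'a list \<Rightarrow> nat \<Rightarrow> 'a set" where
  "mu_rows l a i = {v \<in> set a. i < mu l a v}"

lemma row_count_mu_rows: "row_count l (mu_rows l a) v = (if v \<in> set a then mu l a v else 0)"
proof -
  have "{i. i < l \<and> v \<in> mu_rows l a i} = (if v \<in> set a then {..<mu l a v} else {})"
    unfolding mu_rows_def mu_def by auto
  then show ?thesis unfolding row_count_def by simp
qed

lemma admissible_mu_rows: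
  assumes "x0 \<in> set a" "mu l a x0 = l"
  shows "admissible_rows l a (mu_rows l a)"
  unfolding admissible_rows_def row_count_mu_rows
  using assms by (auto simp: mu_rows_def mu_def)

lemma sum_card_mu_rows: "(\<Sum>i<l. card (mu_rows l a i)) = (\<Sum>v\<in>set a. mu l a v)"
  by (subst sum_card_eq_sum_row_count[of "set a"]) (auto simp: mu_rows_def row_count_mu_rows)

lemma mu_rows_0:
  assumes "1 \<le> l"
  shows "mu_rows l a 0 = set a"
proof -
  have "0 < rho v a" if "v \<in> set a" for v
    using that unfolding rho_def by (auto simp: card_gt_0_iff in_set_conv_nth)
  with assms show ?thesis unfolding mu_rows_def mu_def by auto
qed

lemma mu_rows_1: "mu_rows l a 1 = {x \<in> set a. 2 \<le> mu l a x}"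
  unfolding mu_rows_def by auto

lemma critical_pair_of_admissible_rows:
  fixes a :: "'a::ab_group_add list"
  assumes adm: "admissible_rows l a R" and "2 \<le> l"
    and small: "enat (card (Sigma_l l a)) < pG TYPE('a)"
    and total: "card (Sigma_l l a) + l \<le> (\<Sum>i<l. card (R i)) + 1"
    and margin: "enat (card (Sigma_l l a) + 1) < pG TYPE('a) \<or> 3 \<le> l \<and> 2 \<le> card (R 2)"
  shows "card (R 0 + R 1) + 1 = card (R 0) + card (R 1)"
    and "enat (card (R 0 + R 1) + 2) \<le> pG TYPE('a)"
proof -
  show "card (R 0 + R 1) + 1 = card (R 0) + card (R 1)"
    using critical_first_rows[OF adm \<open>2 \<le> l\<close> small total] by simp
  have "card (R 0 + R 1) \<le> card (Sigma_l l a)"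
    using critical_first_rows[OF adm \<open>2 \<le> l\<close> small total] by simp
  with margin have "enat (card (R 0 + R 1) + 1) < pG TYPE('a)"
    using card_first_rows_less_Sigma_l[OF adm _ _ small total]
    by (auto intro: enat_le_less_trans[OF _ small] enat_le_less_trans)
  then show "enat (card (R 0 + R 1) + 2) \<le> pG TYPE('a)"
    by (simp add: Suc_ile_eq)
qed

text \<open>If the third row is a singleton, moving a second element \<open>z\<close> of \<open>a\<close> into it gives
  admissible rows with first row \<open>set a - {z}\<close> and a two-element third row.\<close>
lemma critical_pair_of_singleton_third_row:
  fixes a :: "'a::ab_group_add list"
  assumes adm: "admissible_rows l a R" and "3 \<le> l" and R0: "R 0 = set a" and R2: "R 2 = {x0}"
    and three: "3 \<le> card (set a)"
    and small: "enat (card (Sigma_l l a)) < pG TYPE('a)"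
    and total: "card (Sigma_l l a) + l \<le> (\<Sum>i<l. card (R i)) + 1"
  obtains X where "X \<subseteq> set a" "2 \<le> card X"
    "card (X + R 1) + 1 = card X + card (R 1)" "enat (card (X + R 1) + 2) \<le> pG TYPE('a)"
proof -
  obtain z where z: "z \<in> set a" "z \<noteq> x0"
    using three by (metis card_le_Suc0_iff_eq List.finite_set not_less_eq_eq numeral_3_eq_3 le_SucI)
  have "set a \<noteq> {z}" using three by auto
  define R' where "R' = R(0 := R 0 - {z}, 2 := insert z (R 2))"
  have adm': "admissible_rows l a R'" and sum': "(\<Sum>i<l. card (R' i)) = (\<Sum>i<l. card (R i))"
    using admissible_rows_move[OF adm, of 0 2 z] \<open>3 \<le> l\<close> z R0 R2 \<open>set a \<noteq> {z}\<close>
    unfolding R'_def by auto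
  have "card (R' 2) = 2" using z(2) R2 unfolding R'_def by simp
  with critical_pair_of_admissible_rows[OF adm' _ small] total sum' \<open>3 \<le> l\<close>
  have "card (R' 0 + R' 1) + 1 = card (R' 0) + card (R' 1)" "enat (card (R' 0 + R' 1) + 2) \<le> pG TYPE('a)"
    by simp_all
  moreover have "R' 0 = set a - {z}" "R' 1 = R 1" unfolding R'_def using R0 by simp_all
  moreover have "2 \<le> card (set a - {z})" using three z(1) by simp
  ultimately show thesis by (intro that[of "set a - {z}"]) auto
qed

lemma exists_critical_pair:
  fixes a :: "'a::ab_group_add list"
  assumes "2 \<le> l" and x0: "x0 \<in> set a" "mu l a x0 = l" and three: "3 \<le> card (set a)"
    and small: "enat (card (Sigma_l l a)) < pG TYPE('a)"
    and small_2: "l = 2 \<Longrightarrow> enat (card (Sigma_l l a) + 1) < pG TYPE('a)"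
    and total: "card (Sigma_l l a) + l = (\<Sum>v\<in>set a. mu l a v) + 1"
  obtains X where "X \<subseteq> set a" "2 \<le> card X"
    "card (X + mu_rows l a 1) + 1 = card X + card (mu_rows l a 1)"
    "enat (card (X + mu_rows l a 1) + 2) \<le> pG TYPE('a)"
proof -
  define R where "R = mu_rows l a"
  have adm: "admissible_rows l a R" unfolding R_def using admissible_mu_rows[OF x0] .
  have total': "card (Sigma_l l a) + l \<le> (\<Sum>i<l. card (R i)) + 1"
    unfolding R_def sum_card_mu_rows using total by simp
  have R0: "R 0 = set a" unfolding R_def using \<open>2 \<le> l\<close> by (simp add: mu_rows_0)
  show thesis
  proof (cases "l = 2 \<or> 2 \<le> card (R 2)")
    case True
    then have "enat (card (Sigma_l l a) + 1) < pG TYPE('a) \<or> 3 \<le> l \<and> 2 \<le> card (R 2)"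
      using small_2 \<open>2 \<le> l\<close> by (cases "l = 2") auto
    from critical_pair_of_admissible_rows[OF adm \<open>2 \<le> l\<close> small total' this]
    have "card (set a + R 1) + 1 = card (set a) + card (R 1)"
      "enat (card (set a + R 1) + 2) \<le> pG TYPE('a)"
      unfolding R0 .
    with three show thesis unfolding R_def by (intro that[of "set a"]) auto
  next
    case False
    then have "3 \<le> l" using \<open>2 \<le> l\<close> by simp
    have "R 2 \<subseteq> set a" "x0 \<in> R 2"
      unfolding R_def mu_rows_def using x0 \<open>3 \<le> l\<close> by auto
    with False have "R 2 = {x0}"
      using card_le_Suc0_iff_eq[of "R 2"] by (auto intro: finite_subset)
    from critical_pair_of_singleton_third_row[OF adm \<open>3 \<le> l\<close> R0 this three small total'] that
    show thesis unfolding R_def by blast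
  qed
qed

text \<open>Vosper's theorem makes \<open>R\<close> a progression, whose difference then propagates to \<open>A\<close>.\<close>
lemma arith_prog_of_critical_pairs:
  fixes A X R :: "'a::ab_group_add set"
  assumes "finite A" "A \<noteq> {}" "finite X" "finite R" "2 \<le> card X" "2 \<le> card R"
    and crit_A: "card (A + R) + 1 = card A + card R" "enat (card (A + R)) < pG TYPE('a)"
    and crit_X: "card (X + R) + 1 = card X + card R" "enat (card (X + R) + 2) \<le> pG TYPE('a)"
  shows "arith_prog A"
proof -
  obtain d where "d \<noteq> 0" "arith_prog_with_diff d R"
    using vosper[OF assms(3,4,5,6) crit_X] by blast
  then have "arith_prog_with_diff d A"
    using arith_prog_with_diff_left_of_right[OF assms(1,2) _ assms(6) crit_A] by blast
  then show ?thesis using \<open>d \<noteq> 0\<close> by (rule arith_prog_if_with_diff)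
qed

theorem theorem6p8:
  fixes a :: "'a::ab_group_add list" and l m :: nat
  assumes "2 \<le> l" and "l \<le> m" and "length a = m"
    and "if l = 2 then enat (card (Sigma_l l a)) + 1 < pG TYPE('a)
         else enat (card (Sigma_l l a)) < pG TYPE('a)"
    and "\<exists>x\<in>set a. mu l a x = l"
    and "card {x\<in>set a. mu l a x \<ge> 2} \<ge> 2"
    and "int (card (Sigma_l l a)) = (\<Sum>x\<in>set a. int (mu l a x)) - int l + 1"
  shows "arith_prog (set a)"
proof -
  obtain x0 where x0: "x0 \<in> set a" "mu l a x0 = l" using assms(5) by blast
  have small_2: "l = 2 \<Longrightarrow> enat (card (Sigma_l l a) + 1) < pG TYPE('a)"
    using assms(4) by (simp add: one_enat_def)
  then have small: "enat (card (Sigma_l l a)) < pG TYPE('a)"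
    using assms(4) enat_le_less_trans[of "card (Sigma_l l a)" "card (Sigma_l l a) + 1"]
    by (cases "l = 2") simp_all
  have total: "card (Sigma_l l a) + l = (\<Sum>v\<in>set a. mu l a v) + 1"
    using assms(7) by (simp flip: of_nat_sum)
  let ?R1 = "mu_rows l a 1"
  have crit: "card (set a + ?R1) + 1 = card (set a) + card ?R1" "card (set a + ?R1) \<le> card (Sigma_l l a)"
    using critical_first_rows[OF admissible_mu_rows[OF x0] assms(1) small] total assms(1)
    by (simp_all add: sum_card_mu_rows mu_rows_0)
  have two: "2 \<le> card ?R1" using assms(6) unfolding mu_rows_1 .
  show ?thesis
  proof (cases "card (set a) = 2")
    case False
    with two have "3 \<le> card (set a)"
      using card_mono[of "set a" ?R1] by (auto simp: mu_rows_def)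
    then obtain X where "X \<subseteq> set a" "2 \<le> card X"
      "card (X + ?R1) + 1 = card X + card ?R1" "enat (card (X + ?R1) + 2) \<le> pG TYPE('a)"
      using exists_critical_pair[OF assms(1) x0 _ small small_2 total] by blast
    with x0(1) two crit show ?thesis
      by (intro arith_prog_of_critical_pairs[of "set a" X ?R1])
        (auto simp: mu_rows_def intro: finite_subset enat_le_less_trans[OF _ small])
  qed (rule arith_prog_card_2)
qed

end
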